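(* Let $d\geq 1$ be an integer, $P$ a positive integer, $I=\{1,\ldots,P\}$, and $$F_1(\alpha)=\sum_{x_1,\ldots,x_d\in I}e(\alpha f_d(x_1,\ldots,x_d)).$$ Then for every $\varepsilon>0$, $$\int_0^1|F_1(\alpha)|^2\,d\alpha\ll P^{d+\varepsilon}.$$
   Context: For an integer $d\geq 1$ define $f_d$ as follows: if $d=2k$ is even ($k\geq 1$), $f_d(x_1,\ldots,x_d)=\prod_{i=1}^{k}(x_{2i-1}^2+x_{2i}^2)$; if $d=2k+1$ is odd ($k\geq 0$), $f_d(x_1,\ldots,x_d)=x_1\prod_{i=1}^{k}(x_{2i}^2+x_{2i+1}^2)$ (empty product $=1$). Here $e(\alpha)=e^{2\pi i\alpha}$ and the implied constant in $\ll$ depends at most on $\varepsilon$ and $d$. *)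

theory Defs
  imports "HOL-Analysis.Analysis"
begin

definition e :: "real \<Rightarrow> complex" where
  "e \<alpha> = exp (2 * of_real pi * \<i> * of_real \<alpha>)"

text \<open>The form f_d; a point (x_1,...,x_d) is a function x :: nat => int, using indices 1..d.\<close>
definition f :: "nat \<Rightarrow> (nat \<Rightarrow> int) \<Rightarrow> int" where
  "f d x = (if even d
     then (\<Prod>i=1..d div 2. (x (2*i-1))^2 + (x (2*i))^2)
     else x 1 * (\<Prod>i=1..d div 2. (x (2*i))^2 + (x (2*i+1))^2))"

definition F1 :: "nat \<Rightarrow> nat \<Rightarrow> real \<Rightarrow> complex" where
  "F1 d P \<alpha> = (\<Sum>x\<in>PiE {1..d} (\<lambda>_. {1..int P}). e (\<alpha> * of_int (f d x)))"

end

theory Submission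
  imports Defs "HOL-Number_Theory.Number_Theory"
begin

text \<open>By orthogonality, \<open>\<integral>\<^sub>0\<^sup>1 |F\<^sub>1|\<^sup>2\<close> is the number of pairs \<open>(x, y)\<close> in the grid \<open>I\<^sup>d\<close> with
  \<open>f\<^sub>d x = f\<^sub>d y\<close>, so it is at most \<open>P\<^sup>d\<close> times the largest fibre of \<open>f\<^sub>d\<close> on the grid.
  A point with \<open>f\<^sub>d x = n\<close> is determined by a divisor of \<open>n\<close> (the lone variable \<open>x\<^sub>1\<close> for odd \<open>d\<close>)
  and by \<open>k = d div 2\<close> pairs \<open>(a, b)\<close> with \<open>a\<^sup>2 + b\<^sup>2\<close> dividing \<open>n\<close>. Primitive representations
  \<open>m = a\<^sup>2 + b\<^sup>2\<close> inject into the square roots of \<open>-1\<close> modulo \<open>m\<close>, and there are at most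
  \<open>2 \<tau>(m)\<close> of those; hence a fibre has at most \<open>2\<^sup>k \<tau>(n)\<^bsup>3k+1\<^esup>\<close> points, which by the
  divisor bound \<open>\<tau>(n) \<ll> n\<^sup>\<delta>\<close> is \<open>\<ll> n\<^sup>\<delta> \<le> (2P)\<^bsup>2d\<delta>\<^esup>\<close>.\<close>

section \<open>The divisor bound\<close>

lemma divisors_prime_power_mult_subset:
  fixes p m :: nat
  assumes "prime p" and "\<not> p dvd m"
  shows "{c. c dvd p ^ a * m} \<subseteq> (\<lambda>(i, c). p ^ i * c) ` ({..a} \<times> {c. c dvd m})"
proof
  fix c assume "c \<in> {c. c dvd p ^ a * m}"
  hence c: "c dvd p ^ a * m" by simp
  have "m \<noteq> 0" using assms(2) by (metis dvd_0_right)
  hence "c \<noteq> 0" using c assms(1) by (metis dvd_0_left_iff mult_is_0 not_prime_0 power_eq_0_iff)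
  have "\<not> is_unit p" using assms(1) by (simp add: prime_nat_iff)
  then obtain c' where c': "c = p ^ multiplicity p c * c'" "\<not> p dvd c'"
    using multiplicity_decompose'[OF \<open>c \<noteq> 0\<close>] by blast
  have "coprime c' (p ^ a)"
    using c'(2) assms(1) by (metis coprime_commute coprime_power_right_iff prime_imp_coprime_nat)
  moreover have "c' dvd p ^ a * m" using c c' by (metis dvd_mult_right)
  ultimately have "c' dvd m" by (simp add: coprime_dvd_mult_right_iff)
  have "multiplicity p c \<le> multiplicity p (p ^ a * m)"
    using c \<open>c \<noteq> 0\<close> \<open>m \<noteq> 0\<close> assms(1) by (intro dvd_imp_multiplicity_le) auto
  also have "\<dots> = a"
    using assms \<open>m \<noteq> 0\<close> by (simp add: prime_elem_multiplicity_mult_distrib not_dvd_imp_multiplicity_0)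
  finally show "c \<in> (\<lambda>(i, c). p ^ i * c) ` ({..a} \<times> {c. c dvd m})"
    using \<open>c' dvd m\<close> c'(1) by (auto intro!: image_eqI[of _ _ "(multiplicity p c, c')"])
qed

lemma card_divisors_prime_power_mult_le:
  fixes p m :: nat
  assumes "prime p" and "\<not> p dvd m"
  shows "card {c. c dvd p ^ a * m} \<le> (a + 1) * card {c. c dvd m}"
proof -
  have "m > 0" using assms(2) by (metis dvd_0_right gr0I)
  hence fin: "finite {c. c dvd m}" by simp
  have "card {c. c dvd p ^ a * m} \<le> card ((\<lambda>(i, c). p ^ i * c) ` ({..a} \<times> {c. c dvd m}))"
    using fin by (intro card_mono divisors_prime_power_mult_subset assms) auto
  also have "\<dots> \<le> card ({..a} \<times> {c. c dvd m})"
    using fin by (intro card_image_le) auto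
  finally show ?thesis by (simp add: card_cartesian_product)
qed

lemma add_one_le_exp_mult:
  fixes c :: real
  assumes "c > 0"
  shows "real a + 1 \<le> max 1 (1 / c) * exp (c * real a)"
proof -
  have exp_ge: "1 + c * real a \<le> exp (c * real a)"
    using assms by (intro exp_ge_add_one_self_aux) simp
  have "real a + 1 \<le> max 1 (1 / c) * (1 + c * real a)"
  proof (cases "c \<ge> 1")
    case True
    have "max 1 (1 / c) = 1" using True by simp
    moreover have "real a \<le> c * real a" using True mult_right_mono[of 1 c "real a"] by simp
    ultimately show ?thesis by simp
  next
    case False
    thus ?thesis using assms by (simp add: field_simps)
  qed
  also have "\<dots> \<le> max 1 (1 / c) * exp (c * real a)"
    using exp_ge by (intro mult_left_mono) auto
  finally show ?thesis .
qed

lemma card_divisors_le_prod_powr: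
  fixes g :: "nat \<Rightarrow> real" and \<delta> :: real
  assumes g: "\<And>p a. prime p \<Longrightarrow> real a + 1 \<le> g p * real p powr (\<delta> * real a)"
  shows "n > 0 \<Longrightarrow> real (card {c. c dvd n}) \<le> (\<Prod>p\<in>prime_factors n. g p) * real n powr \<delta>"
proof (induction n rule: less_induct)
  case (less n)
  show ?case
  proof (cases "n = 1")
    case False
    then obtain p where p: "prime p" "p dvd n" using less.prems prime_factor_nat by blast
    define a where "a = multiplicity p n"
    define m where "m = n div p ^ a"
    have n: "n = p ^ a * m" using multiplicity_dvd[of p n] by (simp add: m_def a_def)
    have "\<not> p dvd m" unfolding m_def a_def by (rule multiplicity_decompose) (use less.prems p(1) in auto)
    have "a > 0" using p less.prems by (simp add: a_def prime_multiplicity_gt_zero_iff)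
    have "m > 0" using n less.prems by (auto intro: gr0I)
    have "1 < p ^ a" using prime_gt_1_nat[OF p(1)] \<open>a > 0\<close> by (intro one_less_power)
    hence "1 * m < p ^ a * m" using \<open>m > 0\<close> by (intro mult_strict_right_mono)
    hence "m < n" using n by simp
    have factors: "prime_factors n = insert p (prime_factors m)"
      using n \<open>a > 0\<close> \<open>m > 0\<close> p(1)
      by (simp add: prime_factors_product prime_factors_power prime_prime_factors)
    have "p \<notin> prime_factors m" using \<open>\<not> p dvd m\<close> by auto
    have n_powr: "real n powr \<delta> = real p powr (\<delta> * real a) * real m powr \<delta>"
      using n prime_gt_0_nat[OF p(1)] by (simp add: powr_mult powr_realpow[symmetric] powr_powr mult.commute)
    have "real (card {c. c dvd n}) \<le> real ((a + 1) * card {c. c dvd m})"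
      using card_divisors_prime_power_mult_le[OF p(1) \<open>\<not> p dvd m\<close>, of a] n
      by (simp only: of_nat_le_iff)
    also have "\<dots> = (real a + 1) * real (card {c. c dvd m})" by (simp add: algebra_simps)
    also have "\<dots> \<le> (g p * real p powr (\<delta> * real a)) * ((\<Prod>q\<in>prime_factors m. g q) * real m powr \<delta>)"
      using g[OF p(1), of a] less.IH[OF \<open>m < n\<close> \<open>m > 0\<close>] by (intro mult_mono) auto
    also have "\<dots> = (\<Prod>q\<in>prime_factors n. g q) * real n powr \<delta>"
      using factors \<open>p \<notin> prime_factors m\<close> n_powr by simp
    finally show ?thesis .
  qed simp
qed

lemma card_divisors_bound:
  fixes \<delta> :: real
  assumes "\<delta> > 0"
  shows "\<exists>C. \<forall>n > 0. real (card {c. c dvd n}) \<le> C * real n powr \<delta>"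
proof -
  define g where "g p = max 1 (1 / (\<delta> * ln (real p)))" for p :: nat
  define B where "B = max 1 (1 / (\<delta> * ln 2))"
  define K where "K = nat \<lceil>exp (1 / \<delta>)\<rceil>"
  have g: "real a + 1 \<le> g p * real p powr (\<delta> * real a)" if "prime p" for p a
  proof -
    have "real p > 1" using prime_gt_1_nat[OF that] by simp
    hence "real a + 1 \<le> g p * exp ((\<delta> * ln (real p)) * real a)"
      unfolding g_def using assms by (intro add_one_le_exp_mult) simp
    also have "exp ((\<delta> * ln (real p)) * real a) = real p powr (\<delta> * real a)"
      using \<open>real p > 1\<close> by (simp add: powr_def mult_ac)
    finally show ?thesis .
  qed
  \<comment> \<open>For \<open>p > exp (1 / \<delta>)\<close> the local factor is 1, so only the primes \<open>p \<le> K\<close> contribute.\<close>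
  have g_le: "g p \<le> (if p \<le> K then B else 1)" if "prime p" for p
  proof (cases "p \<le> K")
    case True
    have "0 < ln (real p)" "ln 2 \<le> ln (real p)" using prime_ge_2_nat[OF that] by simp_all
    hence "1 / (\<delta> * ln (real p)) \<le> 1 / (\<delta> * ln 2)"
      using assms by (intro divide_left_mono mult_left_mono mult_pos_pos) auto
    thus ?thesis using True by (simp add: g_def B_def)
  next
    case False
    hence "exp (1 / \<delta>) < real p"
      using real_nat_ceiling_ge[of "exp (1 / \<delta>)"] unfolding K_def by linarith
    hence "ln (exp (1 / \<delta>)) < ln (real p)" using prime_gt_0_nat[OF that] by (subst ln_less_cancel_iff) auto
    hence "1 / \<delta> < ln (real p)" by simp
    hence "1 \<le> \<delta> * ln (real p)" using assms by (simp add: field_simps)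
    thus ?thesis using False by (simp add: g_def)
  qed
  have "real (card {c. c dvd n}) \<le> B ^ (K + 1) * real n powr \<delta>" if "n > 0" for n
  proof -
    have "(\<Prod>p\<in>prime_factors n. g p) \<le> (\<Prod>p\<in>prime_factors n. if p \<le> K then B else 1)"
    proof (intro prod_mono conjI)
      fix p assume "p \<in> prime_factors n"
      thus "g p \<le> (if p \<le> K then B else 1)" by (intro g_le) auto
    qed (simp add: g_def le_max_iff_disj)
    also have "\<dots> = B ^ card {p \<in> prime_factors n. p \<le> K}"
      by (simp add: prod.inter_filter[symmetric])
    also have "\<dots> \<le> B ^ (K + 1)"
    proof (intro power_increasing)
      have "card {p \<in> prime_factors n. p \<le> K} \<le> card {..K}" by (intro card_mono) auto
      thus "card {p \<in> prime_factors n. p \<le> K} \<le> K + 1" by simp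
    qed (simp add: B_def)
    finally have "(\<Prod>p\<in>prime_factors n. g p) \<le> B ^ (K + 1)" .
    with card_divisors_le_prod_powr[OF g that] show ?thesis
      by (meson mult_right_mono order_trans powr_ge_zero)
  qed
  thus ?thesis by blast
qed

definition pos_divisors :: "int \<Rightarrow> int set" where
  "pos_divisors z = {c. 0 < c \<and> c dvd z}"

lemma finite_pos_divisors: "z \<noteq> 0 \<Longrightarrow> finite (pos_divisors z)"
  unfolding pos_divisors_def
  by (rule finite_subset[of _ "{-\<bar>z\<bar>..\<bar>z\<bar>}"]) (auto dest: dvd_imp_le_int)

lemma card_pos_divisors_mono: "z \<noteq> 0 \<Longrightarrow> w dvd z \<Longrightarrow> card (pos_divisors w) \<le> card (pos_divisors z)"
  by (rule card_mono[OF finite_pos_divisors]) (auto simp: pos_divisors_def intro: dvd_trans)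

lemma pos_divisors_eq_image_int:
  assumes "z > 0"
  shows "pos_divisors z = int ` {c. c dvd nat z}"
proof (intro equalityI subsetI)
  fix c assume "c \<in> pos_divisors z"
  hence "c = int (nat c)" "nat c dvd nat z"
    using assms by (auto simp: pos_divisors_def simp flip: int_dvd_int_iff)
  thus "c \<in> int ` {c. c dvd nat z}" by blast
next
  fix c assume "c \<in> int ` {c. c dvd nat z}"
  then obtain n where "c = int n" "n dvd nat z" by blast
  moreover have "n \<noteq> 0" using \<open>n dvd nat z\<close> assms by (metis dvd_0_left_iff nat_0_iff not_le)
  ultimately show "c \<in> pos_divisors z"
    using assms by (auto simp: pos_divisors_def simp flip: int_dvd_int_iff)
qed

lemma card_pos_divisors_bound:
  fixes \<delta> :: real
  assumes "\<delta> > 0"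
  shows "\<exists>C. \<forall>z > 0. real (card (pos_divisors z)) \<le> C * real_of_int z powr \<delta>"
proof -
  obtain C where C: "\<And>n. n > 0 \<Longrightarrow> real (card {c. c dvd n}) \<le> C * real n powr \<delta>"
    using card_divisors_bound[OF assms] by blast
  have "real (card (pos_divisors z)) \<le> C * real_of_int z powr \<delta>" if "z > 0" for z
    using C[of "nat z"] that by (simp add: pos_divisors_eq_image_int card_image)
  thus ?thesis by blast
qed

section \<open>Square roots of \<open>-1\<close> and sums of two squares\<close>

definition square_roots_mod :: "int \<Rightarrow> int \<Rightarrow> int set" where
  "square_roots_mod a z = {s. 0 \<le> s \<and> s < z \<and> [s^2 = a] (mod z)}"

lemma finite_square_roots_mod: "finite (square_roots_mod a z)"
  unfolding square_roots_mod_def by (rule finite_subset[of _ "{0..z}"]) auto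

lemma cong_square_gcd_split:
  fixes s t z :: int
  assumes "z > 0" and "[s^2 = t^2] (mod z)" and "coprime t z"
  defines "g \<equiv> gcd (s - t) z"
  shows "z div g dvd s + t" and "z \<le> 2 * lcm g (z div g)"
proof -
  have "g > 0" using assms(1) by (simp add: g_def)
  have z: "z = g * (z div g)" by (simp add: g_def)
  have "z dvd (s - t) * (s + t)"
    using assms(2) by (simp add: cong_iff_dvd_diff power2_eq_square algebra_simps)
  moreover have "s - t = g * ((s - t) div g)" by (simp add: g_def)
  ultimately have "g * (z div g) dvd g * (((s - t) div g) * (s + t))"
    using z by (metis mult.assoc)
  hence "z div g dvd ((s - t) div g) * (s + t)" using \<open>g > 0\<close> by simp
  moreover have "coprime ((s - t) div g) (z div g)"
    unfolding g_def by (rule div_gcd_coprime) (use assms(1) in simp)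
  ultimately show "z div g dvd s + t" by (simp add: coprime_dvd_mult_right_iff coprime_commute)
  define h where "h = gcd g (z div g)"
  have "h dvd s - t" and "h dvd s + t" and "h dvd z"
    using \<open>z div g dvd s + t\<close> by (auto simp: h_def g_def intro: dvd_trans)
  have "h dvd (s + t) - (s - t)" using \<open>h dvd s + t\<close> \<open>h dvd s - t\<close> by (rule dvd_diff)
  moreover have "(s + t) - (s - t) = 2 * t" by simp
  ultimately have "h dvd 2 * t" by simp
  moreover have "coprime h t"
    using coprime_divisors[OF dvd_refl \<open>h dvd z\<close> assms(3)] by (simp add: coprime_commute)
  ultimately have "h dvd 2" by (simp add: coprime_dvd_mult_left_iff)
  hence "h \<le> 2" by (rule zdvd_imp_le) simp
  have "g \<le> z" using assms(1) by (simp add: g_def zdvd_imp_le)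
  hence "z div g > 0" using \<open>g > 0\<close> by (simp add: pos_imp_zdiv_pos_iff)
  have "z = \<bar>g\<bar> * \<bar>z div g\<bar>" using z \<open>g > 0\<close> \<open>z div g > 0\<close> by (metis abs_of_pos)
  also have "\<dots> = h * lcm g (z div g)" unfolding h_def by (rule prod_gcd_lcm_int)
  also have "\<dots> \<le> 2 * lcm g (z div g)" using \<open>h \<le> 2\<close> by (intro mult_right_mono) simp_all
  finally show "z \<le> 2 * lcm g (z div g)" .
qed

lemma cong_square_roots_same_gcd:
  fixes s s' t z :: int
  assumes "z > 0" and "[s^2 = t^2] (mod z)" and "[s'^2 = t^2] (mod z)" and "coprime t z"
    and "gcd (s - t) z = gcd (s' - t) z"
  defines "g \<equiv> gcd (s - t) z"
  shows "[s = s'] (mod lcm g (z div g))"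
proof -
  have "g dvd s - t" by (simp add: g_def)
  moreover have "g dvd s' - t" unfolding g_def assms(5) by simp
  ultimately have "g dvd (s - t) - (s' - t)" by (rule dvd_diff)
  moreover have "z div g dvd (s + t) - (s' + t)"
    using cong_square_gcd_split(1)[OF assms(1,2,4)] cong_square_gcd_split(1)[OF assms(1,3,4)] assms(5)
    by (intro dvd_diff) (simp_all add: g_def)
  ultimately have "lcm g (z div g) dvd s - s'" by (intro lcm_least) simp_all
  thus ?thesis by (simp add: cong_iff_dvd_diff)
qed

text \<open>Fixing one root \<open>t\<close>, a root \<open>s\<close> is determined by the divisor \<open>gcd (s - t) z\<close> of \<open>z\<close>
  together with one bit, namely \<open>s div lcm g (z div g)\<close>.\<close>

lemma card_square_roots_mod_le:
  fixes a z :: int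
  assumes "z > 0" and "coprime a z"
  shows "card (square_roots_mod a z) \<le> 2 * card (pos_divisors z)"
proof (cases "square_roots_mod a z = {}")
  case False
  then obtain t where t: "t \<in> square_roots_mod a z" by blast
  have "[a = t^2] (mod z)" using t by (simp add: square_roots_mod_def cong_sym)
  hence "coprime (t^2) z" using assms(2) by (rule cong_imp_coprime)
  hence "coprime t z" by simp
  have root: "[s^2 = t^2] (mod z)" if "s \<in> square_roots_mod a z" for s
    using that t by (auto simp: square_roots_mod_def intro: cong_trans cong_sym)
  define g where "g s = gcd (s - t) z" for s
  define L where "L s = lcm (g s) (z div g s)" for s
  have L: "0 < L s" "z \<le> 2 * L s" if "s \<in> square_roots_mod a z" for s
    using cong_square_gcd_split(2)[OF assms(1) root[OF that] \<open>coprime t z\<close>] assms(1)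
      lcm_ge_0_int[of "g s" "z div g s"] by (auto simp: L_def g_def)
  define \<phi> where "\<phi> s = (g s, s div L s)" for s
  have "inj_on \<phi> (square_roots_mod a z)"
  proof (rule inj_onI)
    fix s s' assume s: "s \<in> square_roots_mod a z" and s': "s' \<in> square_roots_mod a z"
      and "\<phi> s = \<phi> s'"
    hence "g s = g s'" and "s div L s = s' div L s'" by (simp_all add: \<phi>_def)
    hence div_eq: "s div L s = s' div L s" by (simp add: L_def)
    have "s mod L s = s' mod L s"
      using cong_square_roots_same_gcd[OF assms(1) root[OF s] root[OF s'] \<open>coprime t z\<close>] \<open>g s = g s'\<close>
      by (simp add: L_def g_def cong_def)
    hence "s = s' div L s * L s + s' mod L s"
      unfolding div_eq[symmetric] by (simp flip: \<open>s mod L s = s' mod L s\<close>)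
    thus "s = s'" by simp
  qed
  moreover have "\<phi> ` square_roots_mod a z \<subseteq> pos_divisors z \<times> {0, 1}"
  proof (rule image_subsetI)
    fix s assume s: "s \<in> square_roots_mod a z"
    define l where "l = L s"
    have "0 < l" "0 \<le> s" "s < 2 * l"
      using L[OF s] s by (auto simp: l_def square_roots_mod_def)
    have "s div l * l \<le> s" using div_mult_mod_eq[of s l] pos_mod_sign[of l s] \<open>0 < l\<close> by linarith
    hence "s div l * l < 2 * l" using \<open>s < 2 * l\<close> by linarith
    hence "s div l < 2" using \<open>0 < l\<close> by simp
    moreover have "0 \<le> s div l" using \<open>0 < l\<close> \<open>0 \<le> s\<close> by (simp add: pos_imp_zdiv_nonneg_iff)
    ultimately show "\<phi> s \<in> pos_divisors z \<times> {0, 1}"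
      using assms(1) by (auto simp: \<phi>_def l_def g_def pos_divisors_def)
  qed
  ultimately have "card (square_roots_mod a z) \<le> card (pos_divisors z \<times> {0 :: int, 1})"
    using finite_pos_divisors[of z] assms(1) by (intro card_inj_on_le) simp_all
  thus ?thesis by (simp add: card_cartesian_product)
qed simp

definition two_square_reps :: "int \<Rightarrow> (int \<times> int) set" where
  "two_square_reps z = {(a, b). 0 < a \<and> 0 < b \<and> a^2 + b^2 = z}"

lemma finite_two_square_reps: "finite (two_square_reps z)"
proof (rule finite_subset[of _ "{0..z} \<times> {0..z}"])
  have "a \<le> z" "b \<le> z" if "0 < a" "0 < b" "a^2 + b^2 = z" for a b :: int
  proof -
    have "a \<le> a^2" "b \<le> b^2" using that by (simp_all add: self_le_power)
    thus "a \<le> z" "b \<le> z" using that zero_le_power2[of a] zero_le_power2[of b] by linarith+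
  qed
  thus "two_square_reps z \<subseteq> {0..z} \<times> {0..z}" by (auto simp: two_square_reps_def)
qed simp

lemma coprime_fractions_eq:
  fixes a b c d :: int
  assumes "a * d = b * c" and "coprime a b" and "coprime c d" and "0 < a" and "0 < c"
  shows "a = c \<and> b = d"
proof -
  have "a dvd b * c" using assms(1) by (metis dvd_triv_left)
  hence "a dvd c" using assms(2) by (simp add: coprime_dvd_mult_right_iff)
  moreover have "c dvd d * a" using assms(1) by (metis dvd_triv_right mult.commute)
  hence "c dvd a" using assms(3) by (simp add: coprime_dvd_mult_right_iff coprime_commute)
  ultimately have "a = c" using assms(4,5) by (simp add: zdvd_antisym_nonneg)
  thus ?thesis using assms(1,4) by (simp add: mult.commute)
qed

definition primitive_two_square_reps :: "int \<Rightarrow> (int \<times> int) set" where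
  "primitive_two_square_reps z = {(a, b) \<in> two_square_reps z. coprime a b}"

lemma finite_primitive_two_square_reps: "finite (primitive_two_square_reps z)"
  using finite_two_square_reps[of z] unfolding primitive_two_square_reps_def
  by (rule finite_subset[rotated]) auto

lemma primitive_two_square_rep_root:
  assumes "(a, b) \<in> primitive_two_square_reps z"
  shows "\<exists>t \<in> square_roots_mod (-1) z. [t * b = a] (mod z)"
proof -
  have "0 < a" "0 < b" and z: "a^2 + b^2 = z" and "coprime a b"
    using assms by (auto simp: primitive_two_square_reps_def two_square_reps_def)
  have "z > 0" unfolding z[symmetric] using \<open>0 < a\<close> \<open>0 < b\<close> by (intro add_pos_pos) simp_all
  have "gcd b (b * b + a^2) = gcd b (a^2)" by (rule gcd_add_mult)
  moreover have "coprime b (a^2)" using \<open>coprime a b\<close> by (simp add: coprime_commute)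
  ultimately have "coprime b z"
    using z by (simp add: coprime_iff_gcd_eq_1 power2_eq_square add.commute)
  define t where "t = (a * modular_inverse z b) mod z"
  have "[t * b = a * (modular_inverse z b * b)] (mod z)"
    unfolding t_def by (simp add: cong_def mod_mult_left_eq mult.assoc)
  also have "[a * (modular_inverse z b * b) = a * 1] (mod z)"
    using \<open>coprime b z\<close> by (intro cong_mult cong_refl cong_modular_inverse2)
  finally have tb: "[t * b = a] (mod z)" by simp
  have "[t^2 * b^2 = a^2] (mod z)" using cong_pow[OF tb, of 2] by (simp add: power_mult_distrib)
  also have "[a^2 = (-1) * b^2] (mod z)" using z by (simp add: cong_iff_dvd_diff)
  finally have "[t^2 * b^2 = (-1) * b^2] (mod z)" .
  moreover have "coprime (b^2) z" using \<open>coprime b z\<close> by simp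
  ultimately have "[t^2 = -1] (mod z)" using cong_mult_rcancel by blast
  hence "t \<in> square_roots_mod (-1) z" using \<open>z > 0\<close> by (simp add: square_roots_mod_def t_def)
  with tb show ?thesis by blast
qed

lemma primitive_two_square_reps_eq_if_same_root:
  assumes "(a, b) \<in> primitive_two_square_reps z" and "(c, d) \<in> primitive_two_square_reps z"
    and tb: "[t * b = a] (mod z)" and td: "[t * d = c] (mod z)"
  shows "(a, b) = (c, d)"
proof -
  have pos: "0 < a" "0 < b" "0 < c" "0 < d" and z: "a^2 + b^2 = z" "c^2 + d^2 = z"
    and cop: "coprime a b" "coprime c d"
    using assms(1,2) by (auto simp: primitive_two_square_reps_def two_square_reps_def)
  have "[a * d = (t * b) * d] (mod z)" using tb by (simp add: cong_sym cong_scalar_right)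
  also have "(t * b) * d = b * (t * d)" by simp
  also have "[b * (t * d) = b * c] (mod z)" using td by (simp add: cong_scalar_left)
  finally have cong: "[a * d = b * c] (mod z)" .
  have "2 * (a * d) \<le> a^2 + d^2" "2 * (b * c) \<le> b^2 + c^2"
    using zero_le_power2[of "a - d"] zero_le_power2[of "b - c"] by (simp_all add: power2_diff)
  moreover have "0 < a^2" "0 < b^2" "0 < c^2" "0 < d^2" using pos by simp_all
  ultimately have "a * d < z" "b * c < z" using z by linarith+
  hence "a * d = b * c" using pos cong by (intro cong_less_imp_eq_int) simp_all
  thus ?thesis using coprime_fractions_eq cop pos by blast
qed

text \<open>The map is \<open>(a, b) \<mapsto> a / b mod z\<close>; it is injective because \<open>a d \<equiv> b c (mod z)\<close>
  with \<open>0 < a d, b c < z\<close> forces \<open>a d = b c\<close>.\<close>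

lemma card_primitive_two_square_reps_le:
  "card (primitive_two_square_reps z) \<le> card (square_roots_mod (-1) z)"
proof (rule card_le_if_inj_on_rel[where r = "\<lambda>(a, b) t. [t * b = a] (mod z)"])
  fix p assume p: "p \<in> primitive_two_square_reps z"
  obtain a b where ab: "p = (a, b)" by (cases p)
  then obtain t where "t \<in> square_roots_mod (-1) z" "[t * b = a] (mod z)"
    using primitive_two_square_rep_root[of a b z] p by blast
  thus "\<exists>t. t \<in> square_roots_mod (-1) z \<and> (\<lambda>(a, b) t. [t * b = a] (mod z)) p t"
    using ab by blast
next
  fix p q t
  assume "p \<in> primitive_two_square_reps z" "q \<in> primitive_two_square_reps z"
    and "(\<lambda>(a, b) t. [t * b = a] (mod z)) p t" "(\<lambda>(a, b) t. [t * b = a] (mod z)) q t"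
  moreover obtain a b c d where "p = (a, b)" "q = (c, d)" by (cases p, cases q)
  ultimately show "p = q" using primitive_two_square_reps_eq_if_same_root[of a b z c d t] by simp
qed (rule finite_square_roots_mod)

lemma two_square_reps_subset_scaled_primitive:
  "two_square_reps z \<subseteq>
     (\<Union>g\<in>{g. 0 < g \<and> g^2 dvd z}. (\<lambda>(a, b). (g * a, g * b)) ` primitive_two_square_reps (z div g^2))"
proof
  fix p assume "p \<in> two_square_reps z"
  then obtain a b where p: "p = (a, b)" "0 < a" "0 < b" "a^2 + b^2 = z"
    by (auto simp: two_square_reps_def)
  define g where "g = gcd a b"
  have "g > 0" using p by (simp add: g_def)
  have ab: "a = g * (a div g)" "b = g * (b div g)" by (simp_all add: g_def)
  have "coprime (a div g) (b div g)" unfolding g_def by (rule div_gcd_coprime) (use p in simp)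
  moreover have "0 < a div g" "0 < b div g"
    using p(2,3) \<open>g > 0\<close> by (simp_all add: pos_imp_zdiv_pos_iff g_def zdvd_imp_le)
  moreover have zg: "z = g^2 * ((a div g)^2 + (b div g)^2)"
  proof -
    have "z = (g * (a div g))^2 + (g * (b div g))^2" using p(4) by (simp only: ab[symmetric])
    thus ?thesis by (simp add: power_mult_distrib distrib_left)
  qed
  ultimately have "(a div g, b div g) \<in> primitive_two_square_reps (z div g^2)"
    using \<open>g > 0\<close> by (simp add: primitive_two_square_reps_def two_square_reps_def)
  moreover have "g \<in> {g. 0 < g \<and> g^2 dvd z}" using zg \<open>g > 0\<close> by simp
  ultimately show "p \<in> (\<Union>g\<in>{g. 0 < g \<and> g^2 dvd z}.
      (\<lambda>(a, b). (g * a, g * b)) ` primitive_two_square_reps (z div g^2))"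
    using p(1) ab by force
qed

lemma card_two_square_reps_le:
  assumes "z > 0"
  shows "card (two_square_reps z) \<le> 2 * card (pos_divisors z)^2"
proof -
  define G where "G = {g. 0 < g \<and> g^2 dvd z}"
  have "G \<subseteq> pos_divisors z"
    by (auto simp: G_def pos_divisors_def power2_eq_square intro: dvd_mult_left)
  hence "finite G" using finite_pos_divisors assms by (auto intro: finite_subset)
  have "card (two_square_reps z) \<le>
      card (\<Union>g\<in>G. (\<lambda>(a, b). (g * a, g * b)) ` primitive_two_square_reps (z div g^2))"
    using \<open>finite G\<close> two_square_reps_subset_scaled_primitive[of z] unfolding G_def
    by (intro card_mono finite_UN_I finite_imageI finite_primitive_two_square_reps)
  also have "\<dots> \<le> (\<Sum>g\<in>G. card ((\<lambda>(a, b). (g * a, g * b)) ` primitive_two_square_reps (z div g^2)))"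
    by (rule card_UN_le[OF \<open>finite G\<close>])
  also have "\<dots> \<le> (\<Sum>g\<in>G. 2 * card (pos_divisors z))"
  proof (rule sum_mono)
    fix g assume "g \<in> G"
    hence "z div g^2 dvd z" "z div g^2 > 0"
      using assms by (auto simp: G_def zdvd_imp_le pos_imp_zdiv_pos_iff)
    have "card ((\<lambda>(a, b). (g * a, g * b)) ` primitive_two_square_reps (z div g^2)) \<le>
        card (primitive_two_square_reps (z div g^2))"
      by (intro card_image_le finite_primitive_two_square_reps)
    also have "\<dots> \<le> card (square_roots_mod (-1) (z div g^2))"
      by (rule card_primitive_two_square_reps_le)
    also have "\<dots> \<le> 2 * card (pos_divisors (z div g^2))"
      using \<open>z div g^2 > 0\<close> by (intro card_square_roots_mod_le) simp_all
    also have "\<dots> \<le> 2 * card (pos_divisors z)"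
      using card_pos_divisors_mono[OF _ \<open>z div g^2 dvd z\<close>] assms by simp
    finally show "card ((\<lambda>(a, b). (g * a, g * b)) ` primitive_two_square_reps (z div g^2)) \<le>
        2 * card (pos_divisors z)" .
  qed
  also have "\<dots> \<le> card (pos_divisors z) * (2 * card (pos_divisors z))"
    using card_mono[OF finite_pos_divisors \<open>G \<subseteq> pos_divisors z\<close>] assms by simp
  finally show ?thesis by (simp add: power2_eq_square)
qed

lemma card_UN_two_square_reps_le:
  assumes "z > 0"
  shows "card (\<Union>m\<in>pos_divisors z. two_square_reps m) \<le> 2 * card (pos_divisors z)^3"
proof -
  have "finite (pos_divisors z)" using finite_pos_divisors assms by simp
  hence "card (\<Union>m\<in>pos_divisors z. two_square_reps m) \<le> (\<Sum>m\<in>pos_divisors z. card (two_square_reps m))"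
    by (rule card_UN_le)
  also have "\<dots> \<le> (\<Sum>m\<in>pos_divisors z. 2 * card (pos_divisors z)^2)"
  proof (rule sum_mono)
    fix m assume m: "m \<in> pos_divisors z"
    hence "card (two_square_reps m) \<le> 2 * card (pos_divisors m)^2"
      by (intro card_two_square_reps_le) (simp add: pos_divisors_def)
    also have "\<dots> \<le> 2 * card (pos_divisors z)^2"
      using card_pos_divisors_mono[of z m] m assms by (simp add: pos_divisors_def power_mono)
    finally show "card (two_square_reps m) \<le> 2 * card (pos_divisors z)^2" .
  qed
  finally show ?thesis by (simp add: power2_eq_square power3_eq_cube)
qed

section \<open>Fibres of the form\<close>

abbreviation grid :: "nat \<Rightarrow> nat \<Rightarrow> (nat \<Rightarrow> int) set" where
  "grid d P \<equiv> PiE {1..d} (\<lambda>_. {1..int P})"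

text \<open>Apart from the lone variable \<open>x 1\<close> for odd \<open>d\<close>, the variables of \<open>f d\<close> come in pairs:
  the \<open>i\<close>-th binary form is \<open>x j\<^sup>2 + x (j + 1)\<^sup>2\<close> with \<open>j = pair_index d i\<close>.\<close>

definition pair_index :: "nat \<Rightarrow> nat \<Rightarrow> nat" where
  "pair_index d i = 2 * i - 1 + d mod 2"

lemma pair_index_in_range:
  assumes "i \<in> {1..d div 2}"
  shows "pair_index d i \<in> {1..d}" and "Suc (pair_index d i) \<in> {1..d}"
  using assms unfolding pair_index_def by auto presburger+

lemma pair_index_cases:
  assumes "j \<in> {1..d}"
  shows "(odd d \<and> j = 1) \<or> (\<exists>i\<in>{1..d div 2}. j = pair_index d i \<or> j = Suc (pair_index d i))"
proof -
  let ?i = "(j + 1 - d mod 2) div 2"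
  have "(odd d \<and> j = 1) \<or> (?i \<in> {1..d div 2} \<and> (j = pair_index d ?i \<or> j = Suc (pair_index d ?i)))"
    using assms unfolding pair_index_def by auto presburger
  thus ?thesis by blast
qed

lemma f_eq_lead_mult_prod:
  "f d x = (if odd d then x 1 else 1) *
     (\<Prod>i=1..d div 2. x (pair_index d i)^2 + x (Suc (pair_index d i))^2)"
proof (cases "even d")
  case False
  hence "(\<Prod>i=1..d div 2. x (2*i)^2 + x (2*i+1)^2) =
      (\<Prod>i=1..d div 2. x (pair_index d i)^2 + x (Suc (pair_index d i))^2)"
    by (intro prod.cong) (auto simp: pair_index_def odd_iff_mod_2_eq_one)
  thus ?thesis using False by (simp add: f_def)
qed (simp add: f_def pair_index_def)

lemma f_pos:
  assumes "x \<in> grid d P" and "d \<ge> 1"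
  shows "f d x > 0"
proof -
  have pos: "x j > 0" if "j \<in> {1..d}" for j using PiE_mem[OF assms(1) that] by simp
  have "0 < (if odd d then x 1 else 1)" using pos[of 1] assms(2) by simp
  moreover have "0 < x (pair_index d i)^2 + x (Suc (pair_index d i))^2" if "i \<in> {1..d div 2}" for i
    using pos[OF pair_index_in_range(1)[OF that]] pos[OF pair_index_in_range(2)[OF that]]
    by (intro add_pos_pos) simp_all
  ultimately show ?thesis unfolding f_eq_lead_mult_prod by (intro mult_pos_pos prod_pos) auto
qed

lemma f_le_power:
  assumes "x \<in> grid d P" and "P \<ge> 1"
  shows "f d x \<le> (2 * int P)^(2 * d)"
proof -
  have x: "0 < x j \<and> x j \<le> int P" if "j \<in> {1..d}" for j using PiE_mem[OF assms(1) that] by simp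
  have lead: "(if odd d then x 1 else 1) \<le> (2 * int P)^(2 * (d mod 2))"
  proof (cases "odd d")
    case True
    hence "x 1 \<le> int P" using x[of 1] odd_pos[of d] by simp
    also have "\<dots> \<le> 2 * int P" by simp
    also have "\<dots> \<le> (2 * int P)^2" using assms(2) by (intro self_le_power) simp_all
    finally show ?thesis using True by (simp add: odd_iff_mod_2_eq_one)
  qed simp
  have "x (pair_index d i)^2 + x (Suc (pair_index d i))^2 \<le> (2 * int P)^2" if "i \<in> {1..d div 2}" for i
  proof -
    have "x (pair_index d i)^2 \<le> int P^2" "x (Suc (pair_index d i))^2 \<le> int P^2"
      using x[OF pair_index_in_range(1)[OF that]] x[OF pair_index_in_range(2)[OF that]]
      by (simp_all add: power_mono)
    hence "x (pair_index d i)^2 + x (Suc (pair_index d i))^2 \<le> 2 * int P^2" by linarith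
    also have "\<dots> \<le> (2 * int P)^2" by (simp add: power_mult_distrib)
    finally show ?thesis .
  qed
  moreover have "1 \<le> (2 * int P)^2" using assms(2) by (intro one_le_power) simp
  ultimately have "(\<Prod>i=1..d div 2. x (pair_index d i)^2 + x (Suc (pair_index d i))^2) \<le>
      ((2 * int P)^2)^(d div 2)"
    by (intro prod_le_power) auto
  hence "f d x \<le> (2 * int P)^(2 * (d mod 2)) * ((2 * int P)^2)^(d div 2)"
    unfolding f_eq_lead_mult_prod using lead x[of 1]
    by (intro mult_mono) (auto intro!: prod_nonneg)
  also have "\<dots> = (2 * int P)^(2 * (d mod 2 + d div 2))" by (simp add: power_add power_mult algebra_simps)
  also have "\<dots> \<le> (2 * int P)^(2 * d)"
    using assms(2) by (intro power_increasing) presburger+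
  finally show ?thesis .
qed

lemma card_fiber_f_le:
  assumes "n > 0"
  shows "card {x \<in> grid d P. f d x = n} \<le>
    card (pos_divisors n) * card (\<Union>m\<in>pos_divisors n. two_square_reps m) ^ (d div 2)"
proof -
  define \<Phi> where "\<Phi> x = (if odd d then x 1 else 1,
    \<lambda>i\<in>{1..d div 2}. (x (pair_index d i), x (Suc (pair_index d i))))" for x :: "nat \<Rightarrow> int"
  have "inj_on \<Phi> (grid d P)"
  proof (rule inj_onI)
    fix x y assume x: "x \<in> grid d P" and y: "y \<in> grid d P" and "\<Phi> x = \<Phi> y"
    hence lead: "odd d \<Longrightarrow> x 1 = y 1"
      and pairs: "\<And>i. i \<in> {1..d div 2} \<Longrightarrow> x (pair_index d i) = y (pair_index d i) \<and>
        x (Suc (pair_index d i)) = y (Suc (pair_index d i))"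
      by (auto simp: \<Phi>_def fun_eq_iff split: if_splits dest!: spec)
    show "x = y"
      by (rule PiE_ext[OF x y]) (use pair_index_cases lead pairs in blast)
  qed
  moreover have "\<Phi> ` {x \<in> grid d P. f d x = n} \<subseteq>
      pos_divisors n \<times> PiE {1..d div 2} (\<lambda>_. \<Union>m\<in>pos_divisors n. two_square_reps m)"
  proof (rule image_subsetI)
    fix x assume "x \<in> {x \<in> grid d P. f d x = n}"
    hence x: "x \<in> grid d P" and n: "n = f d x" by auto
    have pos: "0 < x j" if "j \<in> {1..d}" for j using PiE_mem[OF x that] by simp
    let ?q = "\<lambda>i. x (pair_index d i)^2 + x (Suc (pair_index d i))^2"
    have "(if odd d then x 1 else 1) \<in> pos_divisors n"
      using pos[of 1] odd_pos[of d] by (auto simp: pos_divisors_def n f_eq_lead_mult_prod)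
    moreover have "(x (pair_index d i), x (Suc (pair_index d i))) \<in> (\<Union>m\<in>pos_divisors n. two_square_reps m)"
      if "i \<in> {1..d div 2}" for i
    proof
      show "(x (pair_index d i), x (Suc (pair_index d i))) \<in> two_square_reps (?q i)"
        using pos[OF pair_index_in_range(1)[OF that]] pos[OF pair_index_in_range(2)[OF that]]
        by (simp add: two_square_reps_def)
      show "?q i \<in> pos_divisors n"
        using pos[OF pair_index_in_range(1)[OF that]] pos[OF pair_index_in_range(2)[OF that]] that
        by (auto simp: pos_divisors_def n f_eq_lead_mult_prod intro!: dvd_prodI dvd_mult add_pos_pos)
    qed
    ultimately show "\<Phi> x \<in> pos_divisors n \<times> PiE {1..d div 2} (\<lambda>_. \<Union>m\<in>pos_divisors n. two_square_reps m)"
      by (auto simp: \<Phi>_def)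
  qed
  moreover have "finite (pos_divisors n \<times> PiE {1..d div 2} (\<lambda>_. \<Union>m\<in>pos_divisors n. two_square_reps m))"
    using finite_pos_divisors assms by (auto intro!: finite_PiE finite_two_square_reps)
  ultimately have "card {x \<in> grid d P. f d x = n} \<le>
      card (pos_divisors n \<times> PiE {1..d div 2} (\<lambda>_. \<Union>m\<in>pos_divisors n. two_square_reps m))"
    by (intro card_inj_on_le) (auto intro: inj_on_subset)
  thus ?thesis by (simp add: card_cartesian_product card_PiE)
qed

lemma card_fiber_f_bound:
  fixes \<delta> :: real
  assumes "\<delta> > 0"
  shows "\<exists>C. \<forall>P n. n > 0 \<longrightarrow> real (card {x \<in> grid d P. f d x = n}) \<le> C * real_of_int n powr \<delta>"
proof -
  define k where "k = d div 2"
  define E where "E = 3 * k + 1"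
  have "E > 0" by (simp add: E_def)
  hence "\<delta> / E > 0" using assms by simp
  then obtain C where C: "\<forall>z > 0. real (card (pos_divisors z)) \<le> C * real_of_int z powr (\<delta> / E)"
    using card_pos_divisors_bound by blast
  have "real (card {x \<in> grid d P. f d x = n}) \<le> 2^k * C^E * real_of_int n powr \<delta>" if "n > 0" for P n
  proof -
    define D where "D = card (pos_divisors n)"
    have "card {x \<in> grid d P. f d x = n} \<le> D * card (\<Union>m\<in>pos_divisors n. two_square_reps m) ^ k"
      using card_fiber_f_le[OF that] by (simp add: D_def k_def)
    also have "\<dots> \<le> D * (2 * D^3)^k"
      using card_UN_two_square_reps_le[OF that] unfolding D_def by (intro mult_le_mono2 power_mono) simp_all
    also have "\<dots> = 2^k * D^E" by (simp add: E_def power_mult_distrib power_mult[symmetric] power_add mult_ac)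
    finally have "real (card {x \<in> grid d P. f d x = n}) \<le> real (2^k * D^E)"
      by (simp only: of_nat_le_iff)
    also have "\<dots> = 2^k * real D ^ E" by simp
    also have "real D ^ E \<le> (C * real_of_int n powr (\<delta> / E)) ^ E"
      using C that by (intro power_mono) (simp_all add: D_def)
    also have "\<dots> = C^E * real_of_int n powr \<delta>"
      using that \<open>E > 0\<close> by (simp add: power_mult_distrib powr_power)
    finally show ?thesis by (simp add: mult_ac)
  qed
  thus ?thesis by blast
qed

lemma card_fiber_f_bound_on_grid:
  fixes \<epsilon> :: real
  assumes "d \<ge> 1" and "\<epsilon> > 0"
  shows "\<exists>C. \<forall>P \<ge> 1. \<forall>x \<in> grid d P.
           real (card {y \<in> grid d P. f d y = f d x}) \<le> C * real P powr \<epsilon>"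
proof -
  define \<delta> where "\<delta> = \<epsilon> / (2 * d)"
  obtain C where C: "\<And>P n. n > 0 \<Longrightarrow> real (card {x \<in> grid d P. f d x = n}) \<le> C * real_of_int n powr \<delta>"
    using card_fiber_f_bound[of \<delta> d] assms by (auto simp: \<delta>_def)
  have "C \<ge> 0" using C[of 1 0] by simp
  have "real (card {y \<in> grid d P. f d y = f d x}) \<le> (C * 2 powr \<epsilon>) * real P powr \<epsilon>"
    if "P \<ge> 1" "x \<in> grid d P" for P x
  proof -
    have "f d x > 0" using f_pos[OF that(2) assms(1)] .
    have "real_of_int (f d x) \<le> real_of_int ((2 * int P) ^ (2 * d))"
      using f_le_power[OF that(2,1)] by (simp only: of_int_le_iff)
    hence f_le_real: "real_of_int (f d x) \<le> (2 * real P) ^ (2 * d)" by simp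
    have "real (card {y \<in> grid d P. f d y = f d x}) \<le> C * real_of_int (f d x) powr \<delta>"
      by (rule C[OF \<open>f d x > 0\<close>])
    also have "\<dots> \<le> C * ((2 * real P) ^ (2 * d)) powr \<delta>"
      using f_le_real \<open>f d x > 0\<close> assms(2) \<open>C \<ge> 0\<close>
      by (intro mult_left_mono powr_mono2) (simp_all add: \<delta>_def)
    also have "((2 * real P) ^ (2 * d)) powr \<delta> = 2 powr \<epsilon> * real P powr \<epsilon>"
      using that(1) assms(1)
      by (simp add: powr_realpow[symmetric] powr_powr powr_mult \<delta>_def)
    finally show ?thesis by (simp add: mult_ac)
  qed
  thus ?thesis by blast
qed

section \<open>The mean value\<close>

lemma has_integral_cos_int:
  fixes k :: int
  shows "((\<lambda>\<alpha>. cos (2 * pi * \<alpha> * of_int k)) has_integral (if k = 0 then 1 else 0)) {0..1}"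
proof (cases "k = 0")
  case False
  define F where "F \<alpha> = sin (2 * pi * \<alpha> * of_int k) / (2 * pi * of_int k)" for \<alpha> :: real
  have "(F has_real_derivative cos (2 * pi * \<alpha> * of_int k)) (at \<alpha>)" for \<alpha>
    unfolding F_def using False by (auto intro!: derivative_eq_intros)
  hence "((\<lambda>\<alpha>. cos (2 * pi * \<alpha> * of_int k)) has_integral (F 1 - F 0)) {0..1}"
    by (intro fundamental_theorem_of_calculus)
       (auto simp: has_real_derivative_iff_has_vector_derivative intro: has_vector_derivative_at_within)
  moreover have "F 1 = 0"
    using sin_times_pi_eq_0[of "2 * of_int k"] by (simp add: F_def mult_ac)
  ultimately show ?thesis using False by (simp add: F_def)
qed (use has_integral_const_real[of "1 :: real" 0 1] in simp)

lemma norm_exp_sum_squared: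
  fixes h :: "'a \<Rightarrow> int"
  shows "(cmod (\<Sum>x\<in>X. e (\<alpha> * of_int (h x))))^2 =
           (\<Sum>x\<in>X. \<Sum>y\<in>X. cos (2 * pi * \<alpha> * of_int (h x - h y)))"
proof -
  have e_cis: "e t = cis (2 * pi * t)" for t by (simp add: e_def cis_conv_exp mult_ac)
  have "complex_of_real ((cmod (\<Sum>x\<in>X. e (\<alpha> * of_int (h x))))^2) =
      (\<Sum>x\<in>X. e (\<alpha> * of_int (h x))) * cnj (\<Sum>x\<in>X. e (\<alpha> * of_int (h x)))"
    by (rule complex_norm_square)
  also have "\<dots> = (\<Sum>x\<in>X. \<Sum>y\<in>X. cis (2 * pi * \<alpha> * of_int (h x - h y)))"
    by (simp add: e_cis cnj_sum sum_product cis_cnj cis_mult algebra_simps)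
  finally have "(cmod (\<Sum>x\<in>X. e (\<alpha> * of_int (h x))))^2 =
      Re (\<Sum>x\<in>X. \<Sum>y\<in>X. cis (2 * pi * \<alpha> * of_int (h x - h y)))"
    by (metis Re_complex_of_real)
  thus ?thesis by (simp add: Re_sum)
qed

lemma integral_norm_exp_sum_squared:
  fixes h :: "'a \<Rightarrow> int"
  assumes "finite X"
  shows "integral {0..1} (\<lambda>\<alpha>. (cmod (\<Sum>x\<in>X. e (\<alpha> * of_int (h x))))^2) =
           (\<Sum>x\<in>X. real (card {y \<in> X. h y = h x}))"
proof -
  have inner: "((\<lambda>\<alpha>. \<Sum>y\<in>X. cos (2 * pi * \<alpha> * of_int (h x - h y))) has_integral
      (\<Sum>y\<in>X. if h x - h y = 0 then 1 else 0)) {0..1}" for x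
    by (rule has_integral_sum[OF assms]) (rule has_integral_cos_int)
  have "((\<lambda>\<alpha>. \<Sum>x\<in>X. \<Sum>y\<in>X. cos (2 * pi * \<alpha> * of_int (h x - h y))) has_integral
      (\<Sum>x\<in>X. \<Sum>y\<in>X. if h x - h y = 0 then 1 else 0)) {0..1}"
    by (rule has_integral_sum[OF assms]) (rule inner)
  hence "integral {0..1} (\<lambda>\<alpha>. (cmod (\<Sum>x\<in>X. e (\<alpha> * of_int (h x))))^2) =
      (\<Sum>x\<in>X. \<Sum>y\<in>X. if h x - h y = 0 then 1 else 0)"
    unfolding norm_exp_sum_squared by (rule integral_unique)
  moreover have "(\<Sum>y\<in>X. if h x - h y = 0 then 1 else 0) = real (card {y \<in> X. h y = h x})" for x
  proof -
    have "(\<Sum>y\<in>X. if h x - h y = 0 then 1 else 0) = (\<Sum>y\<in>X. if h y = h x then 1 else (0 :: real))"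
      by (intro sum.cong) auto
    also have "\<dots> = real (card {y \<in> X. h y = h x})"
      using sum.inter_filter[OF assms, of "\<lambda>_. 1 :: real" "\<lambda>y. h y = h x"] by simp
    finally show ?thesis .
  qed
  ultimately show ?thesis by simp
qed

theorem lemma2p1:
  fixes d :: nat and \<epsilon> :: real
  assumes "d \<ge> 1" and "\<epsilon> > 0"
  shows "\<exists>C. \<forall>P::nat. P \<ge> 1 \<longrightarrow>
           integral {0..1} (\<lambda>\<alpha>. (cmod (F1 d P \<alpha>))^2) \<le> C * real P powr (real d + \<epsilon>)"
proof -
  obtain C where C: "\<And>P x. P \<ge> 1 \<Longrightarrow> x \<in> grid d P \<Longrightarrow>
      real (card {y \<in> grid d P. f d y = f d x}) \<le> C * real P powr \<epsilon>"
    using card_fiber_f_bound_on_grid[OF assms] by blast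
  have "integral {0..1} (\<lambda>\<alpha>. (cmod (F1 d P \<alpha>))^2) \<le> C * real P powr (real d + \<epsilon>)"
    if "P \<ge> 1" for P
  proof -
    have "integral {0..1} (\<lambda>\<alpha>. (cmod (F1 d P \<alpha>))^2) = (\<Sum>x\<in>grid d P. real (card {y \<in> grid d P. f d y = f d x}))"
      unfolding F1_def by (intro integral_norm_exp_sum_squared finite_PiE) auto
    also have "\<dots> \<le> (\<Sum>x\<in>grid d P. C * real P powr \<epsilon>)"
      using C[OF that] by (intro sum_mono) auto
    also have "\<dots> = C * real P powr (real d + \<epsilon>)"
      using that by (simp add: card_PiE powr_add powr_realpow)
    finally show ?thesis .
  qed
  thus ?thesis by blast
qed

end
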